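(* Let $\mathcal{A}$ be a unital Banach algebra over $\mathbb{K}=\mathbb{R}$ or $\mathbb{C}$ (a complete normed algebra with $\|AB\|\le\|A\|\,\|B\|$), and let $X,Y\in\mathcal{A}$. Let $(C_k)_{k\ge 2}$ be the homogeneous Lie polynomials of degree $k$ in the symmetric Zassenhaus formula (described in the context), evaluated at $X,Y$ in $\mathcal{A}$ (commutators interpreted as $[A,B]=AB-BA$). Suppose the power series $$ M(\lambda)=\lambda(\|X\|+\|Y\|)+2\sum_{j=2}^{\infty}\lambda^j\|C_j\| $$ has radius of convergence $r_z>0$. For $n\ge 2$ define $$ \Psi_n(\lambda)={\rm e}^{\frac{\lambda}{2}X}\,{\rm e}^{\frac{\lambda}{2}Y}\,{\rm e}^{\lambda^2C_2}\,{\rm e}^{\lambda^3C_3}\cdots{\rm e}^{\lambda^nC_n}\,{\rm e}^{\lambda^nC_n}\cdots{\rm e}^{\lambda^3C_3}\,{\rm e}^{\lambda^2C_2}\,{\rm e}^{\frac{\lambda}{2}Y}\,{\rm e}^{\frac{\lambda}{2}X}. $$ Then $\lim_{n\to\infty}\Psi_n(\lambda)={\rm e}^{\lambda(X+Y)}$ for every $\lambda$ in the ball $B(0,r_z)$, and the convergence is uniform on every compact subset of $B(0,r_z)$.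
   Context: The symmetric Zassenhaus formula: for non-commuting indeterminates $X,Y$ there is a unique sequence $(C_k)_{k\ge2}$ of homogeneous Lie polynomials in $X,Y$ with $C_k$ of degree $k$ such that, as formal power series, ${\rm e}^{X+Y}={\rm e}^{X/2}{\rm e}^{Y/2}{\rm e}^{C_2}{\rm e}^{C_3}\cdots{\rm e}^{C_k}\cdots{\rm e}^{C_k}\cdots{\rm e}^{C_3}{\rm e}^{C_2}{\rm e}^{Y/2}{\rm e}^{X/2}$ (indices increasing then decreasing); equivalently, replacing $X,Y$ by $\lambda X,\lambda Y$, one has $C_k(\lambda X,\lambda Y)=\lambda^kC_k(X,Y)$. Here $C_k$ denotes $C_k(X,Y)\in\mathcal{A}$. Exponentials in $\mathcal{A}$ are defined by the usual power series. *)

theory Defs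
  imports "HOL-Analysis.Analysis"
begin

text \<open>A series is a function from words to coefficients; in a word, False stands for
  the letter X and True for the letter Y.\<close>

type_synonym ncs = "bool list \<Rightarrow> rat"

definition ncs_X :: ncs where "ncs_X w = (if w = [False] then 1 else 0)"
definition ncs_Y :: ncs where "ncs_Y w = (if w = [True] then 1 else 0)"
definition ncs_one :: ncs where "ncs_one w = (if w = [] then 1 else 0)"
definition ncs_add :: "ncs \<Rightarrow> ncs \<Rightarrow> ncs" where "ncs_add f g w = f w + g w"
definition ncs_scale :: "rat \<Rightarrow> ncs \<Rightarrow> ncs" where "ncs_scale c f w = c * f w"

definition ncs_mult :: "ncs \<Rightarrow> ncs \<Rightarrow> ncs" where
  "ncs_mult f g w = (\<Sum>i\<le>length w. f (take i w) * g (drop i w))"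

definition ncs_bracket :: "ncs \<Rightarrow> ncs \<Rightarrow> ncs" where
  "ncs_bracket f g w = ncs_mult f g w - ncs_mult g f w"

primrec ncs_pow :: "ncs \<Rightarrow> nat \<Rightarrow> ncs" where
  "ncs_pow f 0 = ncs_one"
| "ncs_pow f (Suc n) = ncs_mult f (ncs_pow f n)"

text \<open>Exponential series; for series with zero constant term (the only ones used)
  the powers f^n with n > length w do not contribute to the coefficient of w.\<close>
definition ncs_exp :: "ncs \<Rightarrow> ncs" where
  "ncs_exp f w = (\<Sum>n\<le>length w. ncs_pow f n w / fact n)"

definition ncs_prod_list :: "ncs list \<Rightarrow> ncs" where
  "ncs_prod_list fs = foldr ncs_mult fs ncs_one"

inductive_set lie_polys :: "ncs set" where
  lie_X: "ncs_X \<in> lie_polys"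
| lie_Y: "ncs_Y \<in> lie_polys"
| lie_add: "p \<in> lie_polys \<Longrightarrow> q \<in> lie_polys \<Longrightarrow> ncs_add p q \<in> lie_polys"
| lie_scale: "p \<in> lie_polys \<Longrightarrow> ncs_scale c p \<in> lie_polys"
| lie_bracket: "p \<in> lie_polys \<Longrightarrow> q \<in> lie_polys \<Longrightarrow> ncs_bracket p q \<in> lie_polys"

definition ncs_homogeneous :: "nat \<Rightarrow> ncs \<Rightarrow> bool" where
  "ncs_homogeneous k p \<longleftrightarrow> (\<forall>w. length w \<noteq> k \<longrightarrow> p w = 0)"

definition ncs_tendsto :: "(nat \<Rightarrow> ncs) \<Rightarrow> ncs \<Rightarrow> bool" where
  "ncs_tendsto P S \<longleftrightarrow> (\<forall>w. \<exists>N. \<forall>n\<ge>N. P n w = S w)"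

definition zass_formal_prod :: "(nat \<Rightarrow> ncs) \<Rightarrow> nat \<Rightarrow> ncs" where
  "zass_formal_prod C n =
     ncs_prod_list ([ncs_exp (ncs_scale (1/2) ncs_X), ncs_exp (ncs_scale (1/2) ncs_Y)]
       @ map (\<lambda>k. ncs_exp (C k)) [2..<Suc n]
       @ map (\<lambda>k. ncs_exp (C k)) (rev [2..<Suc n])
       @ [ncs_exp (ncs_scale (1/2) ncs_Y), ncs_exp (ncs_scale (1/2) ncs_X)])"

definition sym_zassenhaus :: "(nat \<Rightarrow> ncs) \<Rightarrow> bool" where
  "sym_zassenhaus C \<longleftrightarrow>
     (\<forall>k\<ge>2. C k \<in> lie_polys \<and> ncs_homogeneous k (C k)) \<and>
     ncs_tendsto (zass_formal_prod C) (ncs_exp (ncs_add ncs_X ncs_Y))"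

definition eval_word :: "'a::monoid_mult \<Rightarrow> 'a \<Rightarrow> bool list \<Rightarrow> 'a" where
  "eval_word A B w = prod_list (map (\<lambda>b. if b then B else A) w)"

definition eval_hom :: "nat \<Rightarrow> ncs \<Rightarrow> 'a::real_normed_algebra_1 \<Rightarrow> 'a \<Rightarrow> 'a" where
  "eval_hom k p A B = (\<Sum>w\<in>{w::bool list. length w = k}. real_of_rat (p w) *\<^sub>R eval_word A B w)"

text \<open>Scalars of the ground field 'k (R or C) act on the algebra via iota:
  a unital, central, isometric ring embedding extending the real structure.\<close>
definition scalar_action :: "('k::real_normed_field \<Rightarrow> 'a::real_normed_algebra_1) \<Rightarrow> bool" where
  "scalar_action \<iota> \<longleftrightarrow>
     (\<forall>a b. \<iota> (a + b) = \<iota> a + \<iota> b) \<and> (\<forall>a b. \<iota> (a * b) = \<iota> a * \<iota> b) \<and>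
     (\<forall>r. \<iota> (of_real r) = of_real r) \<and> (\<forall>c x. \<iota> c * x = x * \<iota> c) \<and>
     (\<forall>c x. norm (\<iota> c * x) = norm c * norm x)"

definition Psi :: "('k::real_normed_field \<Rightarrow> 'a::{real_normed_algebra_1,banach}) \<Rightarrow>
    (nat \<Rightarrow> ncs) \<Rightarrow> 'a \<Rightarrow> 'a \<Rightarrow> nat \<Rightarrow> 'k \<Rightarrow> 'a" where
  "Psi \<iota> C X Y n l =
     exp (\<iota> (l / 2) * X) * exp (\<iota> (l / 2) * Y)
     * prod_list (map (\<lambda>k. exp (\<iota> (l ^ k) * eval_hom k (C k) X Y)) [2..<Suc n])
     * prod_list (map (\<lambda>k. exp (\<iota> (l ^ k) * eval_hom k (C k) X Y)) (rev [2..<Suc n]))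
     * exp (\<iota> (l / 2) * Y) * exp (\<iota> (l / 2) * X)"

definition M_coeff :: "(nat \<Rightarrow> ncs) \<Rightarrow> 'a::{real_normed_algebra_1,banach} \<Rightarrow> 'a \<Rightarrow> nat \<Rightarrow> real" where
  "M_coeff C X Y j = (if j = 0 then 0 else if j = 1 then norm X + norm Y
                      else 2 * norm (eval_hom j (C j) X Y))"

end

theory Submission
  imports Defs "HOL-Computational_Algebra.Formal_Power_Series"
begin

(* Put t = iota lambda, which is central. Every factor of Psi_n is an exponential exp (t^k Z), so
  Psi_n is the value at t of a power series in t with coefficients in the algebra, whose t^m
  coefficient is the degree-m part of the formal truncated product evaluated at X and Y. The
  factors of index k > n are 1 + O(t^k), so these coefficients no longer change once n >= m, and
  the formal symmetric Zassenhaus identity forces them to be those of exp (t (X + Y)). Hence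
  Psi_n - exp (t (X + Y)) only involves powers t^m with m > n. Replacing X, Y and the C_k by their
  norms majorises the coefficients by those of exp (M_n), and exp (M_n r) <= exp (M r) for
  0 <= r < r_z. For |lambda| <= rho < r the difference is therefore bounded by a geometric tail of
  order (rho / r)^(n+1), uniformly in lambda. *)

section \<open>Power series over a Banach algebra evaluated at central elements\<close>

definition central :: "'a::ring_1 \<Rightarrow> bool" where
  "central T \<longleftrightarrow> (\<forall>x. T * x = x * T)"

lemma central_power: "central T \<Longrightarrow> central (T ^ n)"
  unfolding central_def by (induction n) (simp, metis mult.assoc power_Suc power_Suc2)

lemma central_mult_power: "central S \<Longrightarrow> (S * Z) ^ n = S ^ n * Z ^ n"
proof (induction n)
  case (Suc n)
  have "(S * Z) ^ Suc n = S * (Z * S ^ n) * Z ^ n"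
    using Suc by (simp add: mult.assoc)
  also have "\<dots> = S ^ Suc n * Z ^ Suc n"
    using central_power[OF Suc.prems, of n] by (simp add: central_def mult.assoc)
  finally show ?case .
qed simp

lemma norm_power_mult_le:
  fixes T :: "'a::real_normed_algebra_1"
  assumes "norm T \<le> \<rho>"
  shows "norm (T ^ m * a) \<le> norm a * \<rho> ^ m"
proof -
  have "norm (T ^ m * a) \<le> norm T ^ m * norm a"
    by (rule order_trans[OF norm_mult_ineq]) (simp add: mult_right_mono norm_power_ineq)
  also have "\<dots> \<le> \<rho> ^ m * norm a"
    using assms by (intro mult_right_mono power_mono) auto
  finally show ?thesis by (simp add: mult.commute)
qed

definition fps_abs_conv :: "real \<Rightarrow> 'a::real_normed_algebra_1 fps \<Rightarrow> bool" where
  "fps_abs_conv r f \<longleftrightarrow> summable (\<lambda>m. norm (fps_nth f m) * r ^ m)"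

definition fps_eval :: "'a::{real_normed_algebra_1,banach} \<Rightarrow> 'a fps \<Rightarrow> 'a" where
  "fps_eval T f = (\<Sum>m. T ^ m * fps_nth f m)"

lemma fps_abs_conv_summable_norm:
  fixes T :: "'a::{real_normed_algebra_1,banach}"
  assumes "fps_abs_conv r f" "norm T \<le> r"
  shows "summable (\<lambda>m. norm (T ^ m * fps_nth f m))"
  by (rule summable_comparison_test'[OF assms(1)[unfolded fps_abs_conv_def], where N = 0])
     (simp add: norm_power_mult_le[OF assms(2)])

lemma fps_abs_conv_mult:
  fixes f g :: "'a::{real_normed_algebra_1,banach} fps"
  assumes "fps_abs_conv r f" "fps_abs_conv r g" "r \<ge> 0"
  shows "fps_abs_conv r (f * g)"
proof -
  let ?f = "\<lambda>m. norm (fps_nth f m) * r ^ m" and ?g = "\<lambda>m. norm (fps_nth g m) * r ^ m"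
  have "summable (\<lambda>m. \<Sum>i\<le>m. ?f i * ?g (m - i))"
    using assms by (intro sums_summable[OF Cauchy_product_sums]) (auto simp: fps_abs_conv_def)
  then show ?thesis unfolding fps_abs_conv_def
  proof (rule summable_comparison_test[rotated], intro exI allI impI)
    fix m
    have "norm (fps_nth (f * g) m) * r ^ m
        \<le> (\<Sum>i\<le>m. norm (fps_nth f i) * norm (fps_nth g (m - i))) * r ^ m"
      unfolding fps_mult_nth atLeast0AtMost using assms(3)
      by (intro mult_right_mono order_trans[OF norm_sum] sum_mono norm_mult_ineq) auto
    also have "\<dots> = (\<Sum>i\<le>m. ?f i * ?g (m - i))"
      by (auto simp: sum_distrib_right intro!: sum.cong simp flip: power_add)
    finally show "norm (norm (fps_nth (f * g) m) * r ^ m) \<le> (\<Sum>i\<le>m. ?f i * ?g (m - i))"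
      using assms(3) by simp
  qed
qed

lemma fps_eval_mult:
  fixes f g :: "'a::{real_normed_algebra_1,banach} fps"
  assumes "fps_abs_conv r f" "fps_abs_conv r g" "norm T \<le> r" "central T"
  shows "fps_eval T (f * g) = fps_eval T f * fps_eval T g"
proof -
  let ?a = "\<lambda>i. T ^ i * fps_nth f i" and ?b = "\<lambda>i. T ^ i * fps_nth g i"
  have "(\<lambda>m. \<Sum>i\<le>m. ?a i * ?b (m - i)) sums (fps_eval T f * fps_eval T g)"
    unfolding fps_eval_def using assms by (intro Cauchy_product_sums fps_abs_conv_summable_norm)
  moreover have "?a i * ?b (m - i) = T ^ m * (fps_nth f i * fps_nth g (m - i))" if "i \<le> m" for i m
  proof -
    have "?a i * ?b (m - i) = T ^ i * (T ^ (m - i) * fps_nth f i) * fps_nth g (m - i)"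
      using central_power[OF assms(4), of "m - i"] by (simp add: central_def mult.assoc)
    also have "\<dots> = T ^ (i + (m - i)) * (fps_nth f i * fps_nth g (m - i))"
      by (simp add: power_add mult.assoc)
    finally show ?thesis using that by simp
  qed
  ultimately have "(\<lambda>m. T ^ m * fps_nth (f * g) m) sums (fps_eval T f * fps_eval T g)"
    by (simp add: fps_mult_nth atLeast0AtMost sum_distrib_left)
  then show ?thesis by (simp add: fps_eval_def sums_iff)
qed

lemma fps_abs_conv_one: "fps_abs_conv r 1"
  unfolding fps_abs_conv_def by (rule summable_finite[of "{0}"]) auto

lemma fps_eval_one: "fps_eval T 1 = 1"
proof -
  have "(\<lambda>m. T ^ m * fps_nth 1 m) = (\<lambda>m. if m = 0 then 1 else 0)" by auto
  then show ?thesis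
    using sums_unique[OF sums_single[of 0 "\<lambda>_. 1"]] by (simp add: fps_eval_def)
qed

lemma fps_abs_conv_prod_list:
  fixes fs :: "'a::{real_normed_algebra_1,banach} fps list"
  assumes "\<forall>f\<in>set fs. fps_abs_conv r f" "r \<ge> 0"
  shows "fps_abs_conv r (prod_list fs)"
  using assms by (induction fs) (simp_all add: fps_abs_conv_one fps_abs_conv_mult)

lemma fps_eval_prod_list:
  fixes fs :: "'a::{real_normed_algebra_1,banach} fps list"
  assumes "\<forall>f\<in>set fs. fps_abs_conv r f" "norm T \<le> r" "central T"
  shows "fps_eval T (prod_list fs) = prod_list (map (fps_eval T) fs)"
proof -
  have "r \<ge> 0" using assms(2) norm_ge_zero order_trans by blast
  with assms show ?thesis
  proof (induction fs)
    case (Cons f fs)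
    then show ?case
      by (simp add: fps_eval_mult[of r f "prod_list fs"] fps_abs_conv_prod_list)
  qed (simp add: fps_eval_one)
qed

lemma fps_nth_le_fps_eval:
  fixes f :: "real fps"
  assumes "fps_abs_conv r f" "r \<ge> 0" "\<forall>i. 0 \<le> fps_nth f i"
  shows "fps_nth f m * r ^ m \<le> fps_eval r f"
proof -
  have "summable (\<lambda>i. r ^ i * fps_nth f i)"
    using assms by (simp add: fps_abs_conv_def mult.commute)
  then have "(\<Sum>i\<in>{m}. r ^ i * fps_nth f i) \<le> (\<Sum>i. r ^ i * fps_nth f i)"
    by (rule sum_le_suminf) (use assms in auto)
  then show ?thesis by (simp add: fps_eval_def mult.commute)
qed

lemma norm_fps_eval_diff_le:
  fixes f g :: "'a::{real_normed_algebra_1,banach} fps"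
  assumes "norm T \<le> \<rho>" "\<And>m. m \<le> n \<Longrightarrow> fps_nth f m = fps_nth g m"
    and f_le: "\<And>m. norm (fps_nth f m) * \<rho> ^ m \<le> c m"
    and g_le: "\<And>m. norm (fps_nth g m) * \<rho> ^ m \<le> c m"
    and "summable c"
  shows "norm (fps_eval T f - fps_eval T g) \<le> 2 * (\<Sum>i. c (i + Suc n))"
proof -
  define d where "d m = T ^ m * fps_nth f m - T ^ m * fps_nth g m" for m
  define b where "b m = (if m \<le> n then 0 else 2 * c m)" for m
  have f_term: "norm (T ^ m * fps_nth f m) \<le> c m" for m
    using norm_power_mult_le[OF assms(1)] f_le by (rule order_trans)
  have g_term: "norm (T ^ m * fps_nth g m) \<le> c m" for m
    using norm_power_mult_le[OF assms(1)] g_le by (rule order_trans)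
  have c_nonneg: "0 \<le> c m" for m
    by (rule order_trans[OF norm_ge_zero f_term])
  have summable_f: "summable (\<lambda>m. T ^ m * fps_nth f m)"
    using f_term by (intro summable_norm_cancel[OF summable_comparison_test'[OF assms(5), where N = 0]]) simp
  have summable_g: "summable (\<lambda>m. T ^ m * fps_nth g m)"
    using g_term by (intro summable_norm_cancel[OF summable_comparison_test'[OF assms(5), where N = 0]]) simp
  have d_le: "norm (d m) \<le> b m" for m
  proof (cases "m \<le> n")
    case False
    have "norm (d m) \<le> norm (T ^ m * fps_nth f m) + norm (T ^ m * fps_nth g m)"
      unfolding d_def by (rule norm_triangle_ineq4)
    also have "\<dots> \<le> c m + c m" by (intro add_mono f_term g_term)
    finally show ?thesis using False by (simp add: b_def)
  qed (simp add: d_def b_def assms(2))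
  have "summable (\<lambda>m. 2 * c m)" using assms(5) by (rule summable_mult)
  then have "summable b"
    by (rule summable_comparison_test'[where N = 0]) (simp add: b_def c_nonneg)
  have summable_d: "summable (\<lambda>m. norm (d m))"
    using d_le by (intro summable_comparison_test'[OF \<open>summable b\<close>, where N = 0]) simp
  have "fps_eval T f - fps_eval T g = (\<Sum>m. d m)"
    unfolding fps_eval_def d_def by (rule suminf_diff[OF summable_f summable_g])
  then have "norm (fps_eval T f - fps_eval T g) \<le> (\<Sum>m. norm (d m))"
    using summable_norm[OF summable_d] by simp
  also have "\<dots> \<le> (\<Sum>m. b m)"
    by (rule suminf_le[OF d_le summable_d \<open>summable b\<close>])
  also have "\<dots> = (\<Sum>i. b (i + Suc n))"
    using suminf_minus_initial_segment[OF \<open>summable b\<close>, of "Suc n"] by (simp add: b_def)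
  also have "\<dots> = 2 * (\<Sum>i. c (i + Suc n))"
    using summable_ignore_initial_segment[OF assms(5), of "Suc n"] by (simp add: b_def suminf_mult)
  finally show ?thesis .
qed

lemma fps_mult_nth_unit_left:
  fixes e h :: "'a::ring_1 fps"
  assumes "\<forall>j\<le>m. fps_nth e j = fps_nth 1 j"
  shows "fps_nth (e * h) m = fps_nth h m"
proof -
  have "fps_nth (e * h) m = (\<Sum>i=0..m. if i = 0 then fps_nth h m else 0)"
    unfolding fps_mult_nth using assms by (intro sum.cong) auto
  then show ?thesis by simp
qed

lemma fps_mult_nth_cong_right:
  fixes f g g' :: "'a::ring_1 fps"
  assumes "\<forall>j\<le>m. fps_nth g j = fps_nth g' j"
  shows "fps_nth (f * g) m = fps_nth (f * g') m"
  using assms by (simp add: fps_mult_nth)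

lemma norm_fps_mult_nth_le:
  fixes f g :: "'a::real_normed_algebra_1 fps"
  assumes "\<forall>i. norm (fps_nth f i) \<le> fps_nth f' i" "\<forall>i. norm (fps_nth g i) \<le> fps_nth g' i"
  shows "norm (fps_nth (f * g) m) \<le> fps_nth (f' * g') m"
proof -
  have "norm (fps_nth (f * g) m) \<le> (\<Sum>i=0..m. norm (fps_nth f i) * norm (fps_nth g (m - i)))"
    unfolding fps_mult_nth by (intro order_trans[OF norm_sum] sum_mono norm_mult_ineq)
  also have "\<dots> \<le> fps_nth (f' * g') m"
    unfolding fps_mult_nth using assms
    by (intro sum_mono mult_mono) (auto intro: order_trans[OF norm_ge_zero])
  finally show ?thesis .
qed

lemma norm_prod_list_nth_le:
  fixes fs :: "'a::real_normed_algebra_1 fps list"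
  assumes "list_all2 (\<lambda>f f'. \<forall>i. norm (fps_nth f i) \<le> fps_nth f' i) fs fs'"
  shows "norm (fps_nth (prod_list fs) m) \<le> fps_nth (prod_list fs') m"
  using assms by (induction arbitrary: m rule: list_all2_induct) (simp_all add: norm_fps_mult_nth_le)

lemma prod_list_nth_nonneg:
  fixes fs :: "real fps list"
  assumes "\<forall>f\<in>set fs. \<forall>i. 0 \<le> fps_nth f i"
  shows "0 \<le> fps_nth (prod_list fs) m"
  using assms
  by (induction fs arbitrary: m) (auto simp: fps_mult_nth intro!: sum_nonneg mult_nonneg_nonneg)

definition exp_monom_fps :: "nat \<Rightarrow> 'a::real_normed_algebra_1 \<Rightarrow> 'a fps" where
  "exp_monom_fps k Z = Abs_fps (\<lambda>m. if k dvd m then Z ^ (m div k) /\<^sub>R fact (m div k) else 0)"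

lemma exp_monom_fps_nth:
  "fps_nth (exp_monom_fps k Z) m = (if k dvd m then Z ^ (m div k) /\<^sub>R fact (m div k) else 0)"
  by (simp add: exp_monom_fps_def)

lemma exp_monom_fps_nth_below: "m < k \<Longrightarrow> fps_nth (exp_monom_fps k Z) m = fps_nth 1 m"
  by (auto simp: exp_monom_fps_nth dest: dvd_imp_le)

lemma norm_exp_monom_fps_nth:
  "norm (fps_nth (exp_monom_fps k Z) m) \<le> fps_nth (exp_monom_fps k (norm Z)) m"
  by (auto simp: exp_monom_fps_nth norm_power_ineq divide_right_mono)

lemma exp_monom_fps_nth_nonneg: "z \<ge> 0 \<Longrightarrow> 0 \<le> fps_nth (exp_monom_fps k (z::real)) m"
  by (simp add: exp_monom_fps_nth)

lemma sums_exp_monom_fps: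
  fixes T Z :: "'a::{real_normed_algebra_1,banach}"
  assumes "central T" "k \<ge> 1"
  shows "(\<lambda>m. T ^ m * fps_nth (exp_monom_fps k Z) m) sums exp (T ^ k * Z)"
proof -
  define g where "g m = T ^ m * fps_nth (exp_monom_fps k Z) m" for m
  have "(\<lambda>j. (T ^ k * Z) ^ j /\<^sub>R fact j) = (\<lambda>j. g (k * j))"
    using assms central_mult_power[OF central_power[OF assms(1)]]
    by (simp add: g_def exp_monom_fps_nth power_mult)
  then have "(\<lambda>j. g (k * j)) sums exp (T ^ k * Z)"
    using exp_converges[of "T ^ k * Z"] by simp
  moreover have "g m = 0" if "m \<notin> range (\<lambda>j. k * j)" for m
    using that by (auto simp: g_def exp_monom_fps_nth elim!: dvdE)
  moreover have "strict_mono (\<lambda>j. k * j)"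
    using assms(2) by (simp add: strict_mono_def)
  ultimately have "g sums exp (T ^ k * Z)"
    using sums_mono_reindex[of "\<lambda>j. k * j" g] by blast
  then show ?thesis by (simp add: g_def[abs_def])
qed

lemma fps_eval_exp_monom_fps:
  "central T \<Longrightarrow> k \<ge> 1 \<Longrightarrow> fps_eval T (exp_monom_fps k Z) = exp (T ^ k * Z)"
  unfolding fps_eval_def by (rule sums_unique[symmetric, OF sums_exp_monom_fps])

lemma fps_abs_conv_exp_monom_fps:
  fixes Z :: "'a::{real_normed_algebra_1,banach}"
  assumes "k \<ge> 1" "r \<ge> 0"
  shows "fps_abs_conv r (exp_monom_fps k Z)"
proof -
  have "summable (\<lambda>m. r ^ m * fps_nth (exp_monom_fps k (norm Z)) m)"
    using assms by (intro sums_summable[OF sums_exp_monom_fps]) (auto simp: central_def)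
  then show ?thesis unfolding fps_abs_conv_def
    by (rule summable_comparison_test'[where N = 0])
       (simp add: assms(2) abs_mult mult.commute mult_left_mono norm_exp_monom_fps_nth)
qed

section \<open>Truncated symmetric Zassenhaus products\<close>

(* f k Z is the factor contributed by a term Z of degree k: exp_monom_fps gives the power series
  of the truncated product, and (\<lambda>k Z. exp (T ^ k * Z)) its value at T. *)
definition zass_half ::
    "(nat \<Rightarrow> 'b \<Rightarrow> 'c) \<Rightarrow> 'b \<Rightarrow> 'b \<Rightarrow> (nat \<Rightarrow> 'b) \<Rightarrow> nat \<Rightarrow> 'c list" where
  "zass_half f A B E n = [f 1 A, f 1 B] @ map (\<lambda>k. f k (E k)) [2..<Suc n]"

definition zass_factors ::
    "(nat \<Rightarrow> 'b \<Rightarrow> 'c) \<Rightarrow> 'b \<Rightarrow> 'b \<Rightarrow> (nat \<Rightarrow> 'b) \<Rightarrow> nat \<Rightarrow> 'c list" where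
  "zass_factors f A B E n = zass_half f A B E n @ rev (zass_half f A B E n)"

lemma zass_half_Suc:
  "zass_half f A B E (Suc n) =
     (if n = 0 then zass_half f A B E n else zass_half f A B E n @ [f (Suc n) (E (Suc n))])"
  by (simp add: zass_half_def)

lemma map_zass_factors: "map g (zass_factors f A B E n) = zass_factors (\<lambda>k z. g (f k z)) A B E n"
  by (simp add: zass_factors_def zass_half_def rev_map)

lemma zass_factors_cong:
  assumes "f 1 A = g 1 A" "f 1 B = g 1 B" "\<And>k. 2 \<le> k \<Longrightarrow> f k (E k) = g k (E k)"
  shows "zass_factors f A B E n = zass_factors g A B E n"
  unfolding zass_factors_def zass_half_def using assms by (auto intro!: map_cong)

lemma list_all2_zass_factors:
  assumes "\<And>k z. P (f k z) (g k (h z))"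
  shows "list_all2 P (zass_factors f A B E n) (zass_factors g (h A) (h B) (\<lambda>k. h (E k)) n)"
  unfolding zass_factors_def zass_half_def using assms
  by (auto intro!: list_all2_appendI simp: list.rel_map intro!: list.rel_refl)

lemma set_zass_factors:
  "x \<in> set (zass_factors f A B E n) \<Longrightarrow> x = f 1 A \<or> x = f 1 B \<or> (\<exists>k\<ge>2. x = f k (E k))"
  by (auto simp: zass_factors_def zass_half_def)

definition zass_fps :: "'a::real_normed_algebra_1 \<Rightarrow> 'a \<Rightarrow> (nat \<Rightarrow> 'a) \<Rightarrow> nat \<Rightarrow> 'a fps" where
  "zass_fps A B E n = prod_list (zass_factors exp_monom_fps A B E n)"

lemma zass_fps_nth_Suc:
  assumes "m \<le> n"
  shows "fps_nth (zass_fps A B E (Suc n)) m = fps_nth (zass_fps A B E n) m"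
proof -
  let ?e = "exp_monom_fps (Suc n) (E (Suc n))"
  have unit: "fps_nth ?e j = fps_nth 1 j" if "j \<le> m" for j
    using that assms by (intro exp_monom_fps_nth_below) simp
  have "fps_nth (prod_list L * (?e * (?e * g))) m = fps_nth (prod_list L * g) m"
    for L and g :: "'a fps"
    using unit by (intro fps_mult_nth_cong_right allI impI)
      (simp add: fps_mult_nth_unit_left)
  then show ?thesis
    by (simp add: zass_fps_def zass_factors_def zass_half_Suc mult.assoc)
qed

lemma zass_fps_nth_stable:
  assumes "m \<le> n" "n \<le> n'"
  shows "fps_nth (zass_fps A B E n') m = fps_nth (zass_fps A B E n) m"
  using assms(2)
proof (induction n' rule: dec_induct)
  case (step k)
  with assms(1) show ?case by (simp add: zass_fps_nth_Suc)
qed simp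

lemma fps_abs_conv_zass_fps:
  fixes A B :: "'a::{real_normed_algebra_1,banach}"
  assumes "r \<ge> 0"
  shows "fps_abs_conv r (zass_fps A B E n)"
  unfolding zass_fps_def using assms
  by (intro fps_abs_conv_prod_list)
     (auto dest!: set_zass_factors intro: fps_abs_conv_exp_monom_fps)

lemma fps_eval_zass_fps:
  fixes A B T :: "'a::{real_normed_algebra_1,banach}"
  assumes "central T"
  shows "fps_eval T (zass_fps A B E n) = prod_list (zass_factors (\<lambda>k Z. exp (T ^ k * Z)) A B E n)"
proof -
  have "fps_eval T (zass_fps A B E n)
      = prod_list (zass_factors (\<lambda>k Z. fps_eval T (exp_monom_fps k Z)) A B E n)"
    unfolding zass_fps_def map_zass_factors[symmetric] using assms
    by (intro fps_eval_prod_list[where r = "norm T"])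
       (auto dest!: set_zass_factors intro: fps_abs_conv_exp_monom_fps)
  also have "\<dots> = prod_list (zass_factors (\<lambda>k Z. exp (T ^ k * Z)) A B E n)"
    using assms by (intro arg_cong[where f = prod_list] zass_factors_cong)
      (simp_all add: fps_eval_exp_monom_fps)
  finally show ?thesis .
qed

lemma norm_zass_fps_nth:
  "norm (fps_nth (zass_fps A B E n) m) \<le> fps_nth (zass_fps (norm A) (norm B) (\<lambda>k. norm (E k)) n) m"
  unfolding zass_fps_def
  by (intro norm_prod_list_nth_le list_all2_zass_factors allI norm_exp_monom_fps_nth)

lemma zass_fps_nth_nonneg:
  fixes a b :: real
  assumes "a \<ge> 0" "b \<ge> 0" "\<And>k. e k \<ge> 0"
  shows "0 \<le> fps_nth (zass_fps a b e n) m"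
  unfolding zass_fps_def using assms
  by (intro prod_list_nth_nonneg) (auto dest!: set_zass_factors intro: exp_monom_fps_nth_nonneg)

lemma fps_eval_real_zass_fps:
  fixes a b \<rho> :: real
  shows "fps_eval \<rho> (zass_fps a b e n)
    = exp (2 * \<rho> * a + 2 * \<rho> * b + 2 * (\<Sum>k=2..n. \<rho> ^ k * e k))"
proof -
  have exp_sum_list: "prod_list (map exp xs) = exp (sum_list xs)" for xs :: "real list"
    by (induction xs) (simp_all add: exp_add)
  have "fps_eval \<rho> (zass_fps a b e n) = prod_list (zass_factors (\<lambda>k z. exp (\<rho> ^ k * z)) a b e n)"
    by (simp add: fps_eval_zass_fps central_def)
  also have "\<dots> = exp (sum_list (zass_factors (\<lambda>k z. \<rho> ^ k * z) a b e n))"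
    unfolding map_zass_factors[of exp "\<lambda>k z. \<rho> ^ k * z", symmetric] by (rule exp_sum_list)
  also have "sum_list (zass_factors (\<lambda>k z. \<rho> ^ k * z) a b e n)
      = 2 * \<rho> * a + 2 * \<rho> * b + 2 * (\<Sum>k=2..n. \<rho> ^ k * e k)"
    by (simp add: zass_factors_def zass_half_def sum_list_rev interv_sum_list_conv_sum_set_nat
          atLeastLessThanSuc_atLeastAtMost del: upt_Suc)
  finally show ?thesis .
qed

section \<open>Evaluating formal series at X and Y\<close>

definition ncs_eval :: "'a::real_normed_algebra_1 \<Rightarrow> 'a \<Rightarrow> ncs \<Rightarrow> 'a fps" where
  "ncs_eval X Y p = Abs_fps (\<lambda>m. eval_hom m p X Y)"

lemma ncs_eval_nth: "fps_nth (ncs_eval X Y p) m = eval_hom m p X Y"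
  by (simp add: ncs_eval_def)

lemma finite_words_length: "finite {w::bool list. length w = m}"
  using finite_lists_length_eq[of "UNIV :: bool set" m] by simp

lemma eval_word_append: "eval_word A B (u @ v) = eval_word A B u * eval_word A B v"
  by (simp add: eval_word_def)

lemma bij_betw_append_words:
  assumes "i \<le> m"
  shows "bij_betw (\<lambda>(u, v). u @ v) ({w::bool list. length w = i} \<times> {w. length w = m - i})
           {w. length w = m}"
  by (rule bij_betwI[where g = "\<lambda>w. (take i w, drop i w)"]) (use assms in auto)

lemma eval_hom_mult_split:
  fixes X Y :: "'a::real_normed_algebra_1"
  assumes "i \<le> m"
  shows "(\<Sum>w | length w = m. real_of_rat (f (take i w) * g (drop i w)) *\<^sub>R eval_word X Y w)
       = eval_hom i f X Y * eval_hom (m - i) g X Y"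
proof -
  let ?h = "\<lambda>w. real_of_rat (f (take i w) * g (drop i w)) *\<^sub>R eval_word X Y w"
  have "eval_hom i f X Y * eval_hom (m - i) g X Y =
     (\<Sum>(u, v)\<in>{w. length w = i} \<times> {w. length w = m - i}.
        (real_of_rat (f u) *\<^sub>R eval_word X Y u) * (real_of_rat (g v) *\<^sub>R eval_word X Y v))"
    unfolding eval_hom_def sum_product sum.cartesian_product ..
  also have "\<dots> = (\<Sum>(u, v)\<in>{w. length w = i} \<times> {w. length w = m - i}. ?h (u @ v))"
    by (intro sum.cong) (auto simp: eval_word_append of_rat_mult)
  also have "\<dots> = sum ?h {w. length w = m}"
    using sum.reindex_bij_betw[OF bij_betw_append_words[OF assms], of ?h]
    by (simp add: case_prod_unfold)
  finally show ?thesis by simp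
qed

lemma ncs_eval_mult: "ncs_eval X Y (ncs_mult f g) = ncs_eval X Y f * ncs_eval X Y g"
proof (rule fps_ext)
  fix m
  have "fps_nth (ncs_eval X Y (ncs_mult f g)) m =
     (\<Sum>i\<le>m. \<Sum>w | length w = m. real_of_rat (f (take i w) * g (drop i w)) *\<^sub>R eval_word X Y w)"
    unfolding ncs_eval_nth eval_hom_def ncs_mult_def
    by (subst sum.swap) (auto simp: of_rat_sum scaleR_sum_left intro!: sum.cong)
  also have "\<dots> = fps_nth (ncs_eval X Y f * ncs_eval X Y g) m"
    by (simp add: fps_mult_nth atLeast0AtMost ncs_eval_nth eval_hom_mult_split)
  finally show "fps_nth (ncs_eval X Y (ncs_mult f g)) m = fps_nth (ncs_eval X Y f * ncs_eval X Y g) m" .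
qed

lemma ncs_eval_one: "ncs_eval X Y ncs_one = 1"
proof (rule fps_ext)
  fix m
  have "{w::bool list. length w = 0} = {[]}" by auto
  then show "fps_nth (ncs_eval X Y ncs_one) m = fps_nth 1 m"
    by (cases "m = 0")
       (auto simp: ncs_eval_nth eval_hom_def ncs_one_def eval_word_def intro!: sum.neutral)
qed

lemma ncs_eval_prod_list: "ncs_eval X Y (ncs_prod_list fs) = prod_list (map (ncs_eval X Y) fs)"
  by (induction fs) (simp_all add: ncs_prod_list_def ncs_eval_one ncs_eval_mult)

lemma eval_hom_homogeneous_eq_0:
  "ncs_homogeneous k f \<Longrightarrow> m \<noteq> k \<Longrightarrow> eval_hom m f X Y = 0"
  by (auto simp: eval_hom_def ncs_homogeneous_def intro!: sum.neutral)

lemma ncs_eval_pow_homogeneous: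
  assumes "ncs_homogeneous k f"
  shows "fps_nth (ncs_eval X Y (ncs_pow f n)) m = (if m = k * n then (eval_hom k f X Y) ^ n else 0)"
proof (induction n arbitrary: m)
  case 0
  then show ?case by (simp add: ncs_eval_one)
next
  case (Suc n)
  have "fps_nth (ncs_eval X Y (ncs_pow f (Suc n))) m
      = (\<Sum>i=0..m. if i = k then eval_hom k f X Y * fps_nth (ncs_eval X Y (ncs_pow f n)) (m - k) else 0)"
    unfolding ncs_pow.simps ncs_eval_mult fps_mult_nth
    by (intro sum.cong) (auto simp: eval_hom_homogeneous_eq_0[OF assms] ncs_eval_nth)
  also have "\<dots> = (if m = k * Suc n then (eval_hom k f X Y) ^ Suc n else 0)"
    by (auto simp: Suc.IH)
  finally show ?case .
qed

lemma ncs_eval_exp_homogeneous: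
  assumes "ncs_homogeneous k f" "k \<ge> 1"
  shows "ncs_eval X Y (ncs_exp f) = exp_monom_fps k (eval_hom k f X Y)"
proof (rule fps_ext)
  fix m
  have "fps_nth (ncs_eval X Y (ncs_exp f)) m = (\<Sum>w | length w = m.
      \<Sum>n\<le>m. (1 / fact n) *\<^sub>R (real_of_rat (ncs_pow f n w) *\<^sub>R eval_word X Y w))"
    unfolding ncs_eval_nth eval_hom_def ncs_exp_def
    using of_rat_of_nat_eq[where 'a = real, of "fact n" for n, unfolded of_nat_fact]
    by (intro sum.cong)
       (auto simp: of_rat_sum of_rat_divide scaleR_sum_left divide_inverse_commute
          of_rat_mult of_rat_inverse)
  also have "\<dots> = (\<Sum>n\<le>m. (1 / fact n) *\<^sub>R fps_nth (ncs_eval X Y (ncs_pow f n)) m)"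
    by (subst sum.swap) (simp add: ncs_eval_nth eval_hom_def scaleR_sum_right)
  also have "\<dots> = (\<Sum>n\<le>m.
      if n = m div k \<and> k dvd m then (1 / fact n) *\<^sub>R (eval_hom k f X Y) ^ n else 0)"
    using assms by (intro sum.cong) (auto simp: ncs_eval_pow_homogeneous)
  also have "\<dots> = fps_nth (exp_monom_fps k (eval_hom k f X Y)) m"
    using assms(2) by (auto simp: exp_monom_fps_nth div_le_dividend divide_inverse)
  finally show "fps_nth (ncs_eval X Y (ncs_exp f)) m = fps_nth (exp_monom_fps k (eval_hom k f X Y)) m" .
qed

lemma eval_hom_cong:
  "(\<And>w. length w = m \<Longrightarrow> p w = q w) \<Longrightarrow> eval_hom m p X Y = eval_hom m q X Y"
  by (simp add: eval_hom_def)

lemma eval_hom_Suc_0: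
  "eval_hom (Suc 0) p X Y = real_of_rat (p [False]) *\<^sub>R X + real_of_rat (p [True]) *\<^sub>R Y"
proof -
  have "{w::bool list. length w = Suc 0} = {[False], [True]}"
    by (auto simp: length_Suc_conv)
  then show ?thesis by (simp add: eval_hom_def eval_word_def)
qed

lemma ncs_eval_exp_X_plus_Y: "ncs_eval X Y (ncs_exp (ncs_add ncs_X ncs_Y)) = exp_monom_fps 1 (X + Y)"
  by (subst ncs_eval_exp_homogeneous)
     (auto simp: ncs_homogeneous_def ncs_add_def ncs_X_def ncs_Y_def eval_hom_Suc_0)

lemma zass_formal_prod_eq_zass_factors:
  "zass_formal_prod C n =
    ncs_prod_list (zass_factors (\<lambda>_. ncs_exp) (ncs_scale (1/2) ncs_X) (ncs_scale (1/2) ncs_Y) C n)"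
  by (simp add: zass_formal_prod_def zass_factors_def zass_half_def rev_map del: upt_Suc)

lemma ncs_eval_zass_formal_prod:
  assumes "\<forall>k\<ge>2. ncs_homogeneous k (C k)"
  shows "ncs_eval X Y (zass_formal_prod C n) =
    zass_fps ((1/2) *\<^sub>R X) ((1/2) *\<^sub>R Y) (\<lambda>k. eval_hom k (C k) X Y) n"
proof -
  have "eval_hom 1 (ncs_scale (1/2) ncs_X) X Y = (1/2) *\<^sub>R X"
    and "eval_hom 1 (ncs_scale (1/2) ncs_Y) X Y = (1/2) *\<^sub>R Y"
    by (simp_all add: eval_hom_Suc_0 ncs_scale_def ncs_X_def ncs_Y_def of_rat_divide)
  moreover have "ncs_homogeneous 1 (ncs_scale (1/2) ncs_X)" "ncs_homogeneous 1 (ncs_scale (1/2) ncs_Y)"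
    by (auto simp: ncs_homogeneous_def ncs_scale_def ncs_X_def ncs_Y_def)
  ultimately have half:
    "ncs_eval X Y (ncs_exp (ncs_scale (1/2) ncs_X)) = exp_monom_fps 1 ((1/2) *\<^sub>R X)"
    "ncs_eval X Y (ncs_exp (ncs_scale (1/2) ncs_Y)) = exp_monom_fps 1 ((1/2) *\<^sub>R Y)"
    by (simp_all add: ncs_eval_exp_homogeneous)
  have "map (ncs_eval X Y) (zass_half (\<lambda>_. ncs_exp) (ncs_scale (1/2) ncs_X) (ncs_scale (1/2) ncs_Y) C n)
      = zass_half exp_monom_fps ((1/2) *\<^sub>R X) ((1/2) *\<^sub>R Y) (\<lambda>k. eval_hom k (C k) X Y) n"
    unfolding zass_half_def using assms
    by (auto simp: half ncs_eval_exp_homogeneous simp del: upt_Suc)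
  then show ?thesis
    by (simp add: zass_formal_prod_eq_zass_factors ncs_eval_prod_list zass_fps_def
        zass_factors_def flip: rev_map)
qed

(* The formal identity makes the coefficients agree for some large truncation index, and
  stability carries this back to n. *)
lemma zass_fps_nth_eq_exp:
  assumes "sym_zassenhaus C" "m \<le> n"
  shows "fps_nth (zass_fps ((1/2) *\<^sub>R X) ((1/2) *\<^sub>R Y) (\<lambda>k. eval_hom k (C k) X Y) n) m
       = fps_nth (exp_monom_fps 1 (X + Y)) m"
proof -
  let ?E = "ncs_exp (ncs_add ncs_X ncs_Y)"
  have "\<forall>w\<in>{w. length w = m}. \<forall>\<^sub>F n in sequentially. zass_formal_prod C n w = ?E w"
    using assms(1) by (auto simp: sym_zassenhaus_def ncs_tendsto_def eventually_sequentially)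
  then have "\<forall>\<^sub>F n in sequentially. \<forall>w\<in>{w. length w = m}. zass_formal_prod C n w = ?E w"
    by (rule eventually_ball_finite[OF finite_words_length])
  then obtain N where N: "\<And>w. length w = m \<Longrightarrow> zass_formal_prod C (max n N) w = ?E w"
    unfolding eventually_sequentially by (meson max.cobounded2 mem_Collect_eq)
  have hom: "\<forall>k\<ge>2. ncs_homogeneous k (C k)"
    using assms(1) by (simp add: sym_zassenhaus_def)
  have "fps_nth (zass_fps ((1/2) *\<^sub>R X) ((1/2) *\<^sub>R Y) (\<lambda>k. eval_hom k (C k) X Y) n) m
      = fps_nth (ncs_eval X Y (zass_formal_prod C (max n N))) m"
    unfolding ncs_eval_zass_formal_prod[OF hom] using assms(2)
    by (intro zass_fps_nth_stable[symmetric]) auto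
  also have "\<dots> = fps_nth (ncs_eval X Y ?E) m"
    unfolding ncs_eval_nth by (rule eval_hom_cong) (rule N)
  finally show ?thesis by (simp only: ncs_eval_exp_X_plus_Y)
qed

section \<open>Convergence of the truncated products\<close>

lemma scalar_action_one: "scalar_action \<iota> \<Longrightarrow> \<iota> 1 = 1"
  unfolding scalar_action_def by (metis of_real_1)

lemma scalar_action_power: "scalar_action \<iota> \<Longrightarrow> \<iota> (l ^ k) = \<iota> l ^ k"
  by (induction k) (simp_all add: scalar_action_one, simp add: scalar_action_def)

lemma scalar_action_central: "scalar_action \<iota> \<Longrightarrow> central (\<iota> l)"
  unfolding scalar_action_def central_def by blast

lemma scalar_action_norm:
  fixes \<iota> :: "'k::real_normed_field \<Rightarrow> 'a::real_normed_algebra_1"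
  shows "scalar_action \<iota> \<Longrightarrow> norm (\<iota> l) = norm l"
  unfolding scalar_action_def by (metis mult.right_neutral norm_one)

lemma scalar_action_half:
  fixes \<iota> :: "'k::real_normed_field \<Rightarrow> 'a::real_normed_algebra_1"
  assumes "scalar_action \<iota>"
  shows "\<iota> (l / 2) * X = \<iota> l * ((1/2) *\<^sub>R X)"
proof -
  have "\<iota> (l / 2) = \<iota> (l * of_real (1/2))" by simp
  also have "\<dots> = \<iota> l * of_real (1/2)"
    using assms unfolding scalar_action_def by metis
  then show ?thesis by (simp add: mult.assoc scaleR_conv_of_real)
qed

lemma Psi_eq_fps_eval:
  assumes "scalar_action \<iota>"
  shows "Psi \<iota> C X Y n l =
    fps_eval (\<iota> l) (zass_fps ((1/2) *\<^sub>R X) ((1/2) *\<^sub>R Y) (\<lambda>k. eval_hom k (C k) X Y) n)"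
proof -
  have "fps_eval (\<iota> l) (zass_fps ((1/2) *\<^sub>R X) ((1/2) *\<^sub>R Y) (\<lambda>k. eval_hom k (C k) X Y) n)
      = prod_list (zass_factors (\<lambda>k Z. exp (\<iota> l ^ k * Z)) ((1/2) *\<^sub>R X) ((1/2) *\<^sub>R Y)
          (\<lambda>k. eval_hom k (C k) X Y) n)"
    using assms by (simp add: fps_eval_zass_fps scalar_action_central)
  also have "\<dots> = Psi \<iota> C X Y n l"
    unfolding Psi_def zass_factors_def zass_half_def scalar_action_half[OF assms]
      scalar_action_power[OF assms]
    by (simp add: mult.assoc rev_map)
  finally show ?thesis ..
qed

lemma exp_eq_fps_eval:
  "scalar_action \<iota> \<Longrightarrow> exp (\<iota> l * Z) = fps_eval (\<iota> l) (exp_monom_fps 1 Z)"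
  by (simp add: fps_eval_exp_monom_fps scalar_action_central)

lemma zass_majorant_nth_le:
  fixes X Y :: "'a::{real_normed_algebra_1,banach}"
  assumes "0 \<le> r" "ereal r < conv_radius (M_coeff C X Y)"
  shows "fps_nth (zass_fps (norm ((1/2::real) *\<^sub>R X)) (norm ((1/2::real) *\<^sub>R Y))
           (\<lambda>k. norm (eval_hom k (C k) X Y)) n) m * r ^ m
       \<le> exp (\<Sum>j. M_coeff C X Y j * r ^ j)"
proof -
  define M where "M = M_coeff C X Y"
  define e where "e = (\<lambda>k. norm (eval_hom k (C k) X Y))"
  have M_nonneg: "0 \<le> M j * r ^ j" for j
    using assms(1) by (simp add: M_def M_coeff_def)
  have "summable (\<lambda>j. norm (M j * r ^ j))"
    using abs_summable_in_conv_radius[of r M] assms by (simp add: M_def)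
  then have summable_M: "summable (\<lambda>j. M j * r ^ j)"
    using M_nonneg by simp
  have "fps_nth (zass_fps (norm ((1/2::real) *\<^sub>R X)) (norm ((1/2::real) *\<^sub>R Y)) e n) m * r ^ m
      \<le> fps_eval r (zass_fps (norm ((1/2::real) *\<^sub>R X)) (norm ((1/2::real) *\<^sub>R Y)) e n)"
    using assms(1) by (intro fps_nth_le_fps_eval fps_abs_conv_zass_fps allI zass_fps_nth_nonneg)
      (auto simp: e_def)
  also have "\<dots> = exp (M 1 * r + (\<Sum>j=2..n. M j * r ^ j))"
    by (simp add: fps_eval_real_zass_fps M_def M_coeff_def e_def sum_distrib_left algebra_simps)
  also have "\<dots> \<le> exp (\<Sum>j. M j * r ^ j)"
  proof -
    have "(\<Sum>j\<in>insert 1 {2..n}. M j * r ^ j) \<le> (\<Sum>j. M j * r ^ j)"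
      using M_nonneg by (intro sum_le_suminf[OF summable_M]) auto
    then show ?thesis by simp
  qed
  finally show ?thesis by (simp add: M_def e_def)
qed

(* Bounding the majorant coefficients at the larger radius r makes them decay geometrically at
  radius \<rho>. *)
lemma norm_Psi_minus_exp_le:
  fixes \<iota> :: "'k::{real_normed_field,banach} \<Rightarrow> 'a::{real_normed_algebra_1,banach}"
  assumes "scalar_action \<iota>" "sym_zassenhaus C"
    and "0 \<le> \<rho>" "\<rho> < r" "ereal r < conv_radius (M_coeff C X Y)" "norm l \<le> \<rho>"
  defines "K \<equiv> exp (\<Sum>j. M_coeff C X Y j * r ^ j)"
  shows "norm (Psi \<iota> C X Y n l - exp (\<iota> l * (X + Y)))
    \<le> 2 * K / (1 - \<rho> / r) * (\<rho> / r) ^ Suc n"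
proof -
  define P where "P = zass_fps ((1/2) *\<^sub>R X) ((1/2) *\<^sub>R Y) (\<lambda>k. eval_hom k (C k) X Y)"
  define q where "q = \<rho> / r"
  have q: "0 \<le> q" "q < 1" and r: "r > 0"
    using assms(3,4) by (auto simp: q_def)
  have coeff_le: "norm (fps_nth (P k) m) * \<rho> ^ m \<le> K * q ^ m" for k m
  proof -
    have "norm (fps_nth (P k) m) * r ^ m \<le> K"
      unfolding K_def P_def
      by (rule order_trans[OF mult_right_mono[OF norm_zass_fps_nth] zass_majorant_nth_le])
         (use r assms(5) in auto)
    then have "norm (fps_nth (P k) m) * r ^ m * q ^ m \<le> K * q ^ m"
      using q by (simp add: mult_right_mono)
    then show ?thesis
      using r by (simp add: q_def power_divide mult.assoc)
  qed
  have exp_coeff: "fps_nth (exp_monom_fps 1 (X + Y)) m = fps_nth (P m) m" for m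
    unfolding P_def by (rule zass_fps_nth_eq_exp[OF assms(2) order_refl, symmetric])
  have "norm (Psi \<iota> C X Y n l - exp (\<iota> l * (X + Y)))
      = norm (fps_eval (\<iota> l) (P n) - fps_eval (\<iota> l) (exp_monom_fps 1 (X + Y)))"
    using assms(1) by (simp add: Psi_eq_fps_eval exp_eq_fps_eval P_def)
  also have "\<dots> \<le> 2 * (\<Sum>i. K * q ^ (i + Suc n))"
  proof (rule norm_fps_eval_diff_le)
    show "norm (\<iota> l) \<le> \<rho>" using assms(1,6) by (simp add: scalar_action_norm)
    show "fps_nth (P n) m = fps_nth (exp_monom_fps 1 (X + Y)) m" if "m \<le> n" for m
      using zass_fps_nth_eq_exp[OF assms(2) that] by (simp add: P_def)
    show "summable (\<lambda>m. K * q ^ m)" using q by (simp add: summable_geometric)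
  qed (use coeff_le exp_coeff in auto)
  also have "(\<Sum>i. K * q ^ (i + Suc n)) = (\<Sum>i. K * q ^ Suc n * q ^ i)"
    by (simp add: power_add mult_ac)
  also have "\<dots> = K / (1 - q) * q ^ Suc n"
    using q by (simp add: suminf_mult summable_geometric suminf_geometric)
  finally show ?thesis by (simp add: q_def mult.assoc)
qed

lemma uniform_limit_Psi:
  fixes \<iota> :: "'k::{real_normed_field,banach} \<Rightarrow> 'a::{real_normed_algebra_1,banach}"
  assumes "scalar_action \<iota>" "sym_zassenhaus C"
    and "0 \<le> \<rho>" "ereal \<rho> < conv_radius (M_coeff C X Y)"
  shows "uniform_limit {l. norm l \<le> \<rho>} (\<lambda>n l. Psi \<iota> C X Y n l)
    (\<lambda>l. exp (\<iota> l * (X + Y))) sequentially"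
proof -
  obtain r where r: "\<rho> < r" "ereal r < conv_radius (M_coeff C X Y)"
    using ereal_dense2[OF assms(4)] by (auto simp: less_ereal.simps)
  define K where "K = exp (\<Sum>j. M_coeff C X Y j * r ^ j)"
  define B where "B n = 2 * K / (1 - \<rho> / r) * (\<rho> / r) ^ Suc n" for n
  have "B \<longlonglongrightarrow> 0"
    unfolding B_def using assms(3) r(1)
    by (intro tendsto_mult_right_zero LIMSEQ_Suc LIMSEQ_power_zero) auto
  moreover have "dist (Psi \<iota> C X Y n l) (exp (\<iota> l * (X + Y))) \<le> B n" if "norm l \<le> \<rho>" for n l
    unfolding dist_norm B_def K_def using assms r that by (intro norm_Psi_minus_exp_le) auto
  ultimately show ?thesis
    by (auto intro!: uniform_limitI elim!: eventually_mono[OF order_tendstoD(2)]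
        intro: le_less_trans)
qed

lemma compact_norm_bounded_below_radius:
  fixes S :: "'a::real_normed_vector set"
  assumes "compact S" "S \<subseteq> {x. ereal (norm x) < R}" "0 < R"
  obtains \<rho> where "0 \<le> \<rho>" "ereal \<rho> < R" "S \<subseteq> {x. norm x \<le> \<rho>}"
proof (cases "S = {}")
  case False
  obtain x where "x \<in> S" "\<forall>y\<in>S. norm y \<le> norm x"
    using compact_attains_sup[OF compact_continuous_image[OF continuous_on_norm_id assms(1)]] False
    by auto
  with assms(2) show ?thesis by (intro that[of "norm x"]) auto
qed (use assms(3) in \<open>intro that[of 0]\<close>, auto simp: zero_ereal_def)

theorem mainTheorem2:
  fixes \<iota> :: "'k::{real_normed_field,banach} \<Rightarrow> 'a::{real_normed_algebra_1,banach}"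
    and C :: "nat \<Rightarrow> ncs" and X Y :: 'a and r_z :: ereal
  assumes "scalar_action \<iota>"
    and "sym_zassenhaus C"
    and "r_z = conv_radius (M_coeff C X Y)"
    and "r_z > 0"
  shows "(\<forall>l::'k. ereal (norm l) < r_z \<longrightarrow>
            (\<lambda>n. Psi \<iota> C X Y n l) \<longlonglongrightarrow> exp (\<iota> l * (X + Y)))
       \<and> (\<forall>K. compact K \<and> K \<subseteq> {l::'k. ereal (norm l) < r_z} \<longrightarrow>
            uniform_limit K (\<lambda>n l. Psi \<iota> C X Y n l) (\<lambda>l. exp (\<iota> l * (X + Y))) sequentially)"
proof -
  have uniform: "uniform_limit K (\<lambda>n l. Psi \<iota> C X Y n l) (\<lambda>l. exp (\<iota> l * (X + Y))) sequentially"
    if K: "compact K" "K \<subseteq> {l::'k. ereal (norm l) < r_z}" for K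
  proof -
    obtain \<rho> where "0 \<le> \<rho>" "ereal \<rho> < r_z" "K \<subseteq> {l. norm l \<le> \<rho>}"
      using compact_norm_bounded_below_radius[OF K assms(4)] .
    with uniform_limit_Psi[OF assms(1,2)] assms(3) show ?thesis
      by (blast intro: uniform_limit_on_subset)
  qed
  show ?thesis
  proof (intro conjI allI impI)
    fix l :: 'k
    assume "ereal (norm l) < r_z"
    then have "uniform_limit {l} (\<lambda>n l. Psi \<iota> C X Y n l) (\<lambda>l. exp (\<iota> l * (X + Y))) sequentially"
      by (intro uniform) auto
    then show "(\<lambda>n. Psi \<iota> C X Y n l) \<longlonglongrightarrow> exp (\<iota> l * (X + Y))"
      by simp
  qed (use uniform in blast)
qed

end
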